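(* Let $\beta\ge\bar\beta$ and let $X^*\in\Omega$ satisfy $\nabla h(X^* )=0$. Then either $(X^* )^\top X^*=I_p$ and $X^*$ is a first-order stationary point of (OCP), or $\sigma_{\min}(X^* )\le\sqrt{2M_1/\beta}$.
   Context: $f:\mathbb{R}^{n\times p}\to\mathbb{R}$ ($n\ge p$) is differentiable with $f$ and $\nabla f$ locally Lipschitz. (OCP) is the problem $\min f(X)$ s.t. $X^\top X=I_p$; the feasible set is the Stiefel manifold $\mathcal{S}_{n,p}=\{X:X^\top X=I_p\}$. $\Phi(M):=\frac12(M+M^\top)$. A point $X\in\mathcal{S}_{n,p}$ is a first-order stationary point of (OCP) if $\mathrm{grad} f(X):=\nabla f(X)-X\Phi(X^\top\nabla f(X))=0$. $\mathcal{A}(X):=\frac32I_p-\frac12X^\top X$, $g(X):=f(X\mathcal{A}(X))$, $h(X):=g(X)+\frac\beta4\|X^\top X-I_p\|_F^2$ with $\beta>0$, $G(X):=\nabla f(Y)|_{Y=X\mathcal{A}(X)}$. $\sigma_{\min}$ denotes the smallest singular value. $\Omega:=\{X:\|X\|_2\le 1+\frac1{12}\}$ ($\|\cdot\|_2$ spectral norm). $M_1:=\sup_{X\in\Omega}\|G(X)\|_F$, $M_2:=\sup_{X\ne Y\in\Omega}\frac{\|\nabla g(X)-\nabla g(Y)\|_F}{\|X-Y\|_F}$, $\bar\beta:=\max\{12M_1,6M_2\}$. *)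

theory Defs
  imports "HOL-Analysis.Analysis"
begin

text \<open>Real n x p matrices are rendered as real^'p^'n (rows indexed by 'n, columns by 'p).
  The inner product on this type is the Frobenius inner product and norm is the Frobenius norm.\<close>

definition mgrad :: "(real^'p^'n \<Rightarrow> real) \<Rightarrow> real^'p^'n \<Rightarrow> real^'p^'n" where
  "mgrad F X = (THE G. (F has_derivative (\<lambda>H. G \<bullet> H)) (at X))"

definition loc_lipschitz :: "('a::metric_space \<Rightarrow> 'b::metric_space) \<Rightarrow> bool" where
  "loc_lipschitz F \<longleftrightarrow> (\<forall>x. \<exists>e>0. \<exists>L. \<forall>y\<in>ball x e. \<forall>z\<in>ball x e. dist (F y) (F z) \<le> L * dist y z)"

definition Phi :: "real^'p^'p \<Rightarrow> real^'p^'p" where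
  "Phi M = (1/2) *\<^sub>R (M + transpose M)"

definition Amap :: "real^'p^'n \<Rightarrow> real^'p^'p" where
  "Amap X = (3/2) *\<^sub>R mat 1 - (1/2) *\<^sub>R (transpose X ** X)"

definition gfun :: "(real^'p^'n \<Rightarrow> real) \<Rightarrow> real^'p^'n \<Rightarrow> real" where
  "gfun f X = f (X ** Amap X)"

definition hfun :: "(real^'p^'n \<Rightarrow> real) \<Rightarrow> real \<Rightarrow> real^'p^'n \<Rightarrow> real" where
  "hfun f \<beta> X = gfun f X + \<beta> / 4 * (norm (transpose X ** X - mat 1))\<^sup>2"

definition Gfun :: "(real^'p^'n \<Rightarrow> real) \<Rightarrow> real^'p^'n \<Rightarrow> real^'p^'n" where
  "Gfun f X = mgrad f (X ** Amap X)"

definition rgrad :: "(real^'p^'n \<Rightarrow> real) \<Rightarrow> real^'p^'n \<Rightarrow> real^'p^'n" where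
  "rgrad f X = mgrad f X - X ** Phi (transpose X ** mgrad f X)"

definition stationary :: "(real^'p^'n \<Rightarrow> real) \<Rightarrow> real^'p^'n \<Rightarrow> bool" where
  "stationary f X \<longleftrightarrow> transpose X ** X = mat 1 \<and> rgrad f X = 0"

definition spec_norm :: "real^'p^'n \<Rightarrow> real" where
  "spec_norm X = onorm (\<lambda>v. X *v v)"

definition sigma_min :: "real^'p^'n \<Rightarrow> real" where
  "sigma_min X = Inf {norm (X *v v) | v. norm v = 1}"

definition Omega :: "(real^'p^'n) set" where
  "Omega = {X. spec_norm X \<le> 1 + 1/12}"

definition M1 :: "(real^'p^'n \<Rightarrow> real) \<Rightarrow> real" where
  "M1 f = (SUP X\<in>Omega. norm (Gfun f X))"

definition M2 :: "(real^'p^'n \<Rightarrow> real) \<Rightarrow> real" where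
  "M2 f = Sup {norm (mgrad (gfun f) X - mgrad (gfun f) Y) / norm (X - Y) | X Y.
                 X \<in> Omega \<and> Y \<in> Omega \<and> X \<noteq> Y}"

definition beta_bar :: "(real^'p^'n \<Rightarrow> real) \<Rightarrow> real" where
  "beta_bar f = max (12 * M1 f) (6 * M2 f)"

end

theory Submission
  imports Defs
begin

(*
  The gradient of h is explicit: with G = grad f (X A(X)),
    grad h (X) = G A(X) - X Phi(X^T G) + beta X (X^T X - I).
  On the Stiefel manifold A(X) = I and the penalty term vanishes, so grad h (X) is the
  Riemannian gradient of f.  Off the manifold, pairing grad h (X) = 0 with the direction X T,
  T = X^T X - I, and using A(X) = I - T/2 gives  beta |X T|^2 = 3/2 <G T, X T>.
  As sigma_min(X) |T| <= |X T| and |G T| <= M1 |T|, this forces beta sigma_min(X) <= 3/2 M1,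
  and beta >= 12 M1 turns that into sigma_min(X)^2 <= 2 M1 / beta.
*)

section \<open>Matrix algebra and the Frobenius inner product\<close>

lemma matrix_add_rdistrib: "((A::real^'m^'n) + B) ** (C::real^'k^'m) = A ** C + B ** C"
  by (simp add: matrix_matrix_mult_def vec_eq_iff sum.distrib distrib_right)

lemma matrix_diff_ldistrib: "(A::real^'m^'n) ** ((B::real^'k^'m) - C) = A ** B - A ** C"
  by (simp add: matrix_matrix_mult_def vec_eq_iff sum_subtractf right_diff_distrib)

lemma matrix_diff_rdistrib: "((A::real^'m^'n) - B) ** (C::real^'k^'m) = A ** C - B ** C"
  by (simp add: matrix_matrix_mult_def vec_eq_iff sum_subtractf left_diff_distrib)

lemma matrix_mult_uminus_right: "(A::real^'m^'n) ** (- (B::real^'k^'m)) = - (A ** B)"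
  by (simp add: matrix_matrix_mult_def vec_eq_iff sum_negf)

lemma transpose_add: "transpose ((A::real^'m^'n) + B) = transpose A + transpose B"
  by (simp add: transpose_def vec_eq_iff)

lemma transpose_diff: "transpose ((A::real^'m^'n) - B) = transpose A - transpose B"
  by (simp add: transpose_def vec_eq_iff)

lemmas matrix_mult_algebra_simps =
  matrix_add_ldistrib matrix_add_rdistrib matrix_diff_ldistrib matrix_diff_rdistrib matrix_mult_uminus_right
  matrix_scalar_ac scalar_matrix_assoc[symmetric] transpose_add transpose_diff transpose_scalar
  matrix_transpose_mul

lemma bounded_bilinear_matrix_mult:
  "bounded_bilinear (\<lambda>(A::real^'m^'n) (B::real^'k^'m). A ** B)"
  unfolding bilinear_conv_bounded_bilinear[symmetric] bilinear_def linear_iff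
  by (simp add: matrix_mult_algebra_simps)

lemma bounded_linear_transpose: "bounded_linear (transpose :: real^'m^'n \<Rightarrow> real^'n^'m)"
  unfolding linear_conv_bounded_linear[symmetric] linear_iff
  by (simp add: matrix_mult_algebra_simps)

lemma inner_transpose: "transpose (A::real^'m^'n) \<bullet> transpose B = A \<bullet> B"
  unfolding inner_vec_def transpose_def by (simp add: sum.swap[of _ "UNIV::'m set"])

lemma norm_transpose: "norm (transpose (A::real^'m^'n)) = norm A"
  by (simp add: norm_eq_sqrt_inner inner_transpose)

lemma inner_matrix_mult_left:
  "(A::real^'k^'n) \<bullet> ((B::real^'m^'n) ** (C::real^'k^'m)) = (transpose B ** A) \<bullet> C"
proof -
  have "A \<bullet> (B ** C) = (\<Sum>i\<in>UNIV. \<Sum>j\<in>UNIV. \<Sum>k\<in>UNIV. A$i$j * (B$i$k * C$k$j))"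
    by (simp add: inner_vec_def matrix_matrix_mult_def sum_distrib_left)
  also have "\<dots> = (\<Sum>i\<in>UNIV. \<Sum>k\<in>UNIV. \<Sum>j\<in>UNIV. A$i$j * (B$i$k * C$k$j))"
    by (rule sum.cong[OF refl], rule sum.swap)
  also have "\<dots> = (\<Sum>k\<in>UNIV. \<Sum>i\<in>UNIV. \<Sum>j\<in>UNIV. A$i$j * (B$i$k * C$k$j))"
    by (rule sum.swap)
  also have "\<dots> = (\<Sum>k\<in>UNIV. \<Sum>j\<in>UNIV. \<Sum>i\<in>UNIV. A$i$j * (B$i$k * C$k$j))"
    by (rule sum.cong[OF refl], rule sum.swap)
  also have "\<dots> = (\<Sum>k\<in>UNIV. \<Sum>j\<in>UNIV. (\<Sum>i\<in>UNIV. B$i$k * A$i$j) * C$k$j)"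
    by (simp add: sum_distrib_left sum_distrib_right mult_ac)
  also have "\<dots> = (transpose B ** A) \<bullet> C"
    by (simp add: inner_vec_def matrix_matrix_mult_def transpose_def)
  finally show ?thesis .
qed

lemma inner_matrix_mult_right:
  "(A::real^'k^'n) \<bullet> ((B::real^'m^'n) ** (C::real^'k^'m)) = (A ** transpose C) \<bullet> B"
proof -
  have "A \<bullet> (B ** C) = transpose A \<bullet> (transpose C ** transpose B)"
    by (metis inner_transpose matrix_transpose_mul)
  also have "\<dots> = (C ** transpose A) \<bullet> transpose B"
    by (simp add: inner_matrix_mult_left)
  also have "\<dots> = (A ** transpose C) \<bullet> B"
    by (metis inner_transpose matrix_transpose_mul transpose_transpose)
  finally show ?thesis .
qed

lemma power2_norm_matrix: "(norm (A::real^'m^'n))\<^sup>2 = (\<Sum>i\<in>UNIV. (norm (A$i))\<^sup>2)"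
  by (simp add: power2_norm_eq_inner inner_vec_def)

lemma power2_norm_matrix_columns: "(norm (A::real^'m^'n))\<^sup>2 = (\<Sum>j\<in>UNIV. (norm (column j A))\<^sup>2)"
proof -
  have "(norm A)\<^sup>2 = (norm (transpose A))\<^sup>2"
    by (simp add: norm_transpose)
  also have "\<dots> = (\<Sum>j\<in>UNIV. (norm (transpose A $ j))\<^sup>2)"
    by (rule power2_norm_matrix)
  also have "\<dots> = (\<Sum>j\<in>UNIV. (norm (column j A))\<^sup>2)"
    by (simp add: transpose_def column_def)
  finally show ?thesis .
qed

lemma power2_norm_matrix_mult_columns:
  "(norm ((A::real^'m^'n) ** (B::real^'k^'m)))\<^sup>2 = (\<Sum>j\<in>UNIV. (norm (A *v column j B))\<^sup>2)"
proof -
  have "column j (A ** B) = A *v column j B" for j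
    by (simp add: column_def matrix_matrix_mult_def matrix_vector_mult_def vec_eq_iff)
  then show ?thesis
    by (simp add: power2_norm_matrix_columns)
qed

lemma norm_matrix_vector_mult_le: "norm ((A::real^'m^'n) *v x) \<le> norm A * norm x"
proof -
  have "(norm (A *v x))\<^sup>2 = (\<Sum>i\<in>UNIV. (A$i \<bullet> x)\<^sup>2)"
    by (simp only: power2_norm_eq_inner) (simp add: inner_vec_def matrix_vector_mul_component power2_eq_square)
  also have "\<dots> \<le> (\<Sum>i\<in>UNIV. (norm (A$i))\<^sup>2 * (norm x)\<^sup>2)"
    by (intro sum_mono) (metis Cauchy_Schwarz_ineq power2_norm_eq_inner)
  also have "\<dots> = (norm A * norm x)\<^sup>2"
    by (simp add: power2_norm_matrix power_mult_distrib sum_distrib_right)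
  finally show ?thesis
    by (rule power2_le_imp_le) simp
qed

lemma norm_matrix_mult_le: "norm ((A::real^'m^'n) ** (B::real^'k^'m)) \<le> norm A * norm B"
proof -
  have "(norm (A ** B))\<^sup>2 = (\<Sum>j\<in>UNIV. (norm (A *v column j B))\<^sup>2)"
    by (rule power2_norm_matrix_mult_columns)
  also have "\<dots> \<le> (\<Sum>j\<in>UNIV. (norm A * norm (column j B))\<^sup>2)"
    by (intro sum_mono power_mono norm_matrix_vector_mult_le norm_ge_zero)
  also have "\<dots> = (norm A * norm B)\<^sup>2"
    by (simp add: power_mult_distrib sum_distrib_left power2_norm_matrix_columns[of B])
  finally show ?thesis
    by (rule power2_le_imp_le) simp
qed

section \<open>The smallest singular value\<close>

lemma sigma_min_nonneg: "0 \<le> sigma_min (X::real^'p^'n)"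
proof -
  have "{norm (X *v v) | v. norm v = 1} \<noteq> {}"
    using norm_axis_1 by blast
  then show ?thesis
    unfolding sigma_min_def by (rule cInf_greatest) auto
qed

lemma sigma_min_le: "norm v = 1 \<Longrightarrow> sigma_min (X::real^'p^'n) \<le> norm (X *v v)"
  unfolding sigma_min_def by (rule cInf_lower[OF _ bdd_belowI[of _ 0]]) auto

lemma sigma_min_mult_norm_le: "sigma_min (X::real^'p^'n) * norm v \<le> norm (X *v v)"
proof (cases "v = 0")
  case False
  then have "sigma_min X \<le> norm (X *v ((1 / norm v) *\<^sub>R v))"
    by (intro sigma_min_le) simp
  also have "\<dots> = norm (X *v v) / norm v"
    by (simp add: matrix_vector_mult_scaleR)
  finally show ?thesis
    using False by (simp add: pos_le_divide_eq)
qed simp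

lemma sigma_min_mult_norm_le_matrix:
  "sigma_min (X::real^'p^'n) * norm (T::real^'k^'p) \<le> norm (X ** T)"
proof -
  have "(sigma_min X * norm T)\<^sup>2 = (\<Sum>j\<in>UNIV. (sigma_min X * norm (column j T))\<^sup>2)"
    by (simp add: power_mult_distrib sum_distrib_left power2_norm_matrix_columns[of T])
  also have "\<dots> \<le> (\<Sum>j\<in>UNIV. (norm (X *v column j T))\<^sup>2)"
    by (intro sum_mono power_mono sigma_min_mult_norm_le mult_nonneg_nonneg sigma_min_nonneg norm_ge_zero)
  also have "\<dots> = (norm (X ** T))\<^sup>2"
    by (rule power2_norm_matrix_mult_columns[symmetric])
  finally show ?thesis
    by (rule power2_le_imp_le) simp
qed

section \<open>Gradients\<close>

lemma mgrad_eqI: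
  assumes "(F has_derivative (\<lambda>H. G \<bullet> H)) (at X)"
  shows "mgrad F X = G"
  unfolding mgrad_def
proof (rule the_equality)
  fix G'
  assume "(F has_derivative (\<lambda>H. G' \<bullet> H)) (at X)"
  then have "(\<lambda>H. G' \<bullet> H) = (\<lambda>H. G \<bullet> H)"
    using assms by (rule has_derivative_unique)
  then have "G' \<bullet> b = G \<bullet> b" for b
    by (simp add: fun_eq_iff)
  then show "G' = G"
    by (auto intro: euclidean_eqI)
qed (use assms in simp)

lemma has_derivative_mgrad:
  assumes "F differentiable (at X)"
  shows "(F has_derivative (\<lambda>H. mgrad F X \<bullet> H)) (at X)"
proof -
  obtain D where D: "(F has_derivative D) (at X)"
    using assms unfolding differentiable_def by blast
  define G where "G = adjoint D 1"
  have D_eq: "D = (\<lambda>H. G \<bullet> H)"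
  proof (rule ext)
    fix H
    have "G \<bullet> H = H \<bullet> adjoint D 1"
      by (simp add: G_def inner_commute)
    also have "\<dots> = D H \<bullet> 1"
      by (rule adjoint_works[OF has_derivative_linear[OF D]])
    finally show "D H = G \<bullet> H"
      by simp
  qed
  with D have "(F has_derivative (\<lambda>H. G \<bullet> H)) (at X)"
    by (simp only:)
  moreover from this have "mgrad F X = G"
    by (rule mgrad_eqI)
  ultimately show ?thesis
    by simp
qed

lemma transpose_Amap: "transpose (Amap X) = Amap X"
  by (simp add: Amap_def matrix_mult_algebra_simps)

lemma Phi_symmetric: "transpose M = M \<Longrightarrow> Phi M = M"
  by (simp add: Phi_def vec_eq_iff)

lemma inner_Phi_symmetric:
  assumes "transpose M = M"
  shows "Phi P \<bullet> M = P \<bullet> M"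
proof -
  have "transpose P \<bullet> M = P \<bullet> M"
    by (metis assms inner_transpose)
  then show ?thesis
    by (simp add: Phi_def inner_add_left)
qed

lemma Amap_eq_id_minus: "Amap (X::real^'p^'n) = mat 1 - (1/2) *\<^sub>R (transpose X ** X - mat 1)"
  by (simp add: Amap_def vec_eq_iff mat_def) (simp add: field_simps)

lemma transpose_gram_minus_id: "transpose (transpose (X::real^'p^'n) ** X - mat 1) = transpose X ** X - mat 1"
  by (simp add: matrix_mult_algebra_simps)

lemma inner_transpose_mult_square:
  fixes X G :: "real^'p^'n" and T :: "real^'p^'p"
  assumes "transpose T = T"
  shows "(transpose X ** G) \<bullet> (T ** T) = (G ** T) \<bullet> (X ** T)"
proof -
  have "(transpose X ** G) \<bullet> (T ** T) = G \<bullet> (X ** (T ** T))"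
    by (rule inner_matrix_mult_left[symmetric])
  also have "\<dots> = G \<bullet> ((X ** T) ** T)"
    by (simp only: matrix_mul_assoc)
  also have "\<dots> = (G ** T) \<bullet> (X ** T)"
    by (rule inner_matrix_mult_right[of G "X ** T" T, unfolded assms])
  finally show ?thesis .
qed

lemma inner_gram_derivative:
  "P \<bullet> (transpose X ** H + transpose H ** X) = (2 *\<^sub>R (X ** Phi P)) \<bullet> H"
proof -
  have "P \<bullet> (transpose X ** H) = (X ** P) \<bullet> H"
    by (simp add: inner_matrix_mult_left)
  moreover have "P \<bullet> (transpose H ** X) = (X ** transpose P) \<bullet> H"
  proof -
    have "P \<bullet> (transpose H ** X) = (P ** transpose X) \<bullet> transpose H"
      by (rule inner_matrix_mult_right)
    also have "\<dots> = (X ** transpose P) \<bullet> H"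
      by (metis inner_transpose matrix_transpose_mul transpose_transpose)
    finally show ?thesis .
  qed
  ultimately show ?thesis
    by (simp add: Phi_def inner_add_left inner_add_right matrix_mult_algebra_simps)
qed

lemma has_derivative_gram:
  "((\<lambda>X::real^'p^'n. transpose X ** X) has_derivative (\<lambda>H. transpose X ** H + transpose H ** X)) (at X)"
  by (rule has_derivative_eq_rhs[OF bounded_bilinear.FDERIV[OF bounded_bilinear_matrix_mult
        bounded_linear_imp_has_derivative[OF bounded_linear_transpose] has_derivative_ident]]) simp

lemma has_derivative_mult_Amap:
  "((\<lambda>X::real^'p^'n. X ** Amap X) has_derivative
     (\<lambda>H. H ** Amap X - (1/2) *\<^sub>R (X ** (transpose X ** H + transpose H ** X)))) (at X)"
proof -
  have "(Amap has_derivative (\<lambda>H. 0 - (1/2) *\<^sub>R (transpose X ** H + transpose H ** X))) (at X)"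
    unfolding Amap_def[abs_def]
    by (intro has_derivative_diff has_derivative_const has_derivative_scaleR_right has_derivative_gram)
  from bounded_bilinear.FDERIV[OF bounded_bilinear_matrix_mult has_derivative_ident this]
  show ?thesis
    by (rule has_derivative_eq_rhs) (simp add: fun_eq_iff matrix_mult_algebra_simps algebra_simps)
qed

lemma continuous_on_mult_Amap: "continuous_on UNIV (\<lambda>X::real^'p^'n. X ** Amap X)"
  by (intro continuous_at_imp_continuous_on ballI has_derivative_continuous[OF has_derivative_mult_Amap])

lemma has_derivative_gfun:
  assumes "f differentiable (at (X ** Amap X))"
  shows "(gfun f has_derivative
    (\<lambda>H. (Gfun f X ** Amap X - X ** Phi (transpose X ** Gfun f X)) \<bullet> H)) (at X)"
proof -
  let ?G = "Gfun f X"
  have "(f has_derivative (\<lambda>H. ?G \<bullet> H)) (at (X ** Amap X))"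
    using has_derivative_mgrad[OF assms] by (simp add: Gfun_def)
  from diff_chain_at[OF has_derivative_mult_Amap this]
  have "(gfun f has_derivative
      (\<lambda>H. ?G \<bullet> (H ** Amap X) - (1/2) * (?G \<bullet> (X ** (transpose X ** H + transpose H ** X))))) (at X)"
    by (simp add: gfun_def[abs_def] o_def inner_diff_right)
  moreover have "?G \<bullet> (H ** Amap X) = (?G ** Amap X) \<bullet> H" for H
    by (simp add: inner_matrix_mult_right transpose_Amap)
  moreover have "?G \<bullet> (X ** (transpose X ** H + transpose H ** X))
      = (2 *\<^sub>R (X ** Phi (transpose X ** ?G))) \<bullet> H" for H
    by (simp only: inner_matrix_mult_left inner_gram_derivative)
  ultimately show ?thesis
    by (simp add: inner_diff_left)
qed

lemma has_derivative_gram_penalty: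
  "((\<lambda>X::real^'p^'n. (norm (transpose X ** X - mat 1))\<^sup>2) has_derivative
     (\<lambda>H. (4 *\<^sub>R (X ** (transpose X ** X - mat 1))) \<bullet> H)) (at X)"
proof -
  define T where "T = transpose X ** X - mat 1"
  have symT: "transpose T = T"
    unfolding T_def by (rule transpose_gram_minus_id)
  have dT: "((\<lambda>X. transpose X ** X - mat 1) has_derivative
      (\<lambda>H. transpose X ** H + transpose H ** X)) (at X)"
    by (rule has_derivative_eq_rhs[OF has_derivative_diff[OF has_derivative_gram has_derivative_const]]) simp
  have "((\<lambda>X. (norm (transpose X ** X - mat 1))\<^sup>2) has_derivative
      (\<lambda>H. T \<bullet> (transpose X ** H + transpose H ** X) + (transpose X ** H + transpose H ** X) \<bullet> T)) (at X)"
    unfolding power2_norm_eq_inner T_def by (rule has_derivative_inner[OF dT dT])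
  moreover have "T \<bullet> (transpose X ** H + transpose H ** X) + (transpose X ** H + transpose H ** X) \<bullet> T
      = (4 *\<^sub>R (X ** T)) \<bullet> H" for H
    using inner_gram_derivative[of T X H] by (simp add: inner_commute Phi_symmetric symT)
  ultimately show ?thesis
    unfolding T_def[symmetric] by simp
qed

lemma mgrad_hfun:
  assumes "f differentiable (at (X ** Amap X))"
  shows "mgrad (hfun f \<beta>) X = Gfun f X ** Amap X - X ** Phi (transpose X ** Gfun f X)
    + \<beta> *\<^sub>R (X ** (transpose X ** X - mat 1))"
proof (rule mgrad_eqI)
  show "(hfun f \<beta> has_derivative (\<lambda>H. (Gfun f X ** Amap X - X ** Phi (transpose X ** Gfun f X)
    + \<beta> *\<^sub>R (X ** (transpose X ** X - mat 1))) \<bullet> H)) (at X)"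
    unfolding hfun_def[abs_def]
    by (rule has_derivative_eq_rhs[OF has_derivative_add[OF has_derivative_gfun[OF assms]
          has_derivative_mult_right[OF has_derivative_gram_penalty]]])
      (simp add: fun_eq_iff inner_add_left)
qed

section \<open>The bound M1 on Omega\<close>

lemma norm_le_sqrt_card_spec_norm:
  "norm (X::real^'p^'n) \<le> sqrt (real CARD('p)) * spec_norm X"
proof -
  have col: "norm (column j X) \<le> spec_norm X" for j
    unfolding spec_norm_def by (rule norm_column_le_onorm)
  have "(norm X)\<^sup>2 = (\<Sum>j\<in>UNIV. (norm (column j X))\<^sup>2)"
    by (rule power2_norm_matrix_columns)
  also have "\<dots> \<le> (\<Sum>j\<in>(UNIV::'p set). (spec_norm X)\<^sup>2)"
    by (intro sum_mono power_mono col norm_ge_zero)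
  also have "\<dots> = (sqrt (real CARD('p)) * spec_norm X)\<^sup>2"
    by (simp add: power_mult_distrib)
  finally have sq: "(norm X)\<^sup>2 \<le> (sqrt (real CARD('p)) * spec_norm X)\<^sup>2" .
  have "0 \<le> spec_norm X"
    using order_trans[OF norm_ge_zero col] .
  then have "0 \<le> sqrt (real CARD('p)) * spec_norm X"
    by simp
  with sq show ?thesis
    by (rule power2_le_imp_le)
qed

lemma bounded_Omega: "bounded (Omega :: (real^'p^'n) set)"
  unfolding bounded_iff
proof (intro exI ballI)
  fix X :: "real^'p^'n"
  assume "X \<in> Omega"
  then have "sqrt (real CARD('p)) * spec_norm X \<le> sqrt (real CARD('p)) * (1 + 1/12)"
    by (intro mult_left_mono) (auto simp: Omega_def)
  then show "norm X \<le> sqrt (real CARD('p)) * (1 + 1/12)"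
    using norm_le_sqrt_card_spec_norm[of X] by linarith
qed

lemma loc_lipschitz_imp_continuous_on:
  assumes "loc_lipschitz (F::'a::metric_space \<Rightarrow> 'b::metric_space)"
  shows "continuous_on UNIV F"
proof -
  have "isCont F x" for x
  proof -
    obtain e L where "e > 0" and L: "\<forall>y\<in>ball x e. \<forall>z\<in>ball x e. dist (F y) (F z) \<le> L * dist y z"
      using assms unfolding loc_lipschitz_def by blast
    have "lipschitz_on (max L 0) (ball x e) F"
    proof (rule lipschitz_onI)
      fix y z
      assume "y \<in> ball x e" "z \<in> ball x e"
      then have "dist (F y) (F z) \<le> L * dist y z"
        using L by blast
      also have "\<dots> \<le> max L 0 * dist y z"
        by (simp add: mult_right_mono)
      finally show "dist (F y) (F z) \<le> max L 0 * dist y z" .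
    qed simp
    then have "continuous_on (ball x e) F"
      by (rule lipschitz_on_continuous_on)
    then show ?thesis
      using \<open>e > 0\<close> by (simp add: continuous_on_eq_continuous_at)
  qed
  then show ?thesis
    by (simp add: continuous_at_imp_continuous_on)
qed

lemma norm_Gfun_le_M1:
  assumes "continuous_on UNIV (mgrad f)" and "X \<in> Omega"
  shows "norm (Gfun f X) \<le> M1 f"
proof -
  have cont: "continuous_on UNIV (Gfun f)"
    unfolding Gfun_def[abs_def]
    by (rule continuous_on_compose2[OF assms(1) continuous_on_mult_Amap]) simp
  have "compact (Gfun f ` closure Omega)"
    by (rule compact_continuous_image[OF continuous_on_subset[OF cont]]) (simp_all add: bounded_Omega)
  then have "bounded (Gfun f ` Omega)"
    by (rule bounded_subset[OF compact_imp_bounded]) (intro image_mono closure_subset)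
  then have "bdd_above ((\<lambda>X. norm (Gfun f X)) ` Omega)"
    by (simp add: bounded_imp_bdd_above bounded_norm_comp)
  then show ?thesis
    unfolding M1_def using assms(2) by (rule cSUP_upper[rotated])
qed

section \<open>Critical points of the penalty function\<close>

lemma mgrad_hfun_Stiefel:
  assumes "f differentiable (at X)" and "transpose X ** X = mat 1"
  shows "mgrad (hfun f \<beta>) X = rgrad f X"
proof -
  have "Amap X = mat 1"
    using assms(2) by (simp add: Amap_eq_id_minus)
  then show ?thesis
    using mgrad_hfun[of f X \<beta>] assms by (simp add: Gfun_def rgrad_def)
qed

lemma hfun_critical_point_identity:
  fixes X :: "real^'p^'n"
  assumes "f differentiable (at (X ** Amap X))" and "mgrad (hfun f \<beta>) X = 0"
  defines "T \<equiv> transpose X ** X - mat 1"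
  shows "\<beta> * (norm (X ** T))\<^sup>2 = 3/2 * ((Gfun f X ** T) \<bullet> (X ** T))"
proof -
  define G where "G = Gfun f X"
  define P where "P = transpose X ** G"
  have grad: "G ** Amap X - X ** Phi P + \<beta> *\<^sub>R (X ** T) = 0"
    using mgrad_hfun[OF assms(1), of \<beta>] assms(2) by (simp add: G_def P_def T_def)
  have symT: "transpose T = T"
    unfolding T_def by (rule transpose_gram_minus_id)
  have Amap_T: "Amap X = mat 1 - (1/2) *\<^sub>R T"
    unfolding T_def by (rule Amap_eq_id_minus)
  have gram_T: "transpose X ** (X ** T) = T ** T + T"
    by (simp add: T_def matrix_mul_assoc matrix_mult_algebra_simps)
  have GA: "(G ** Amap X) \<bullet> (X ** T) = P \<bullet> T - 1/2 * ((G ** T) \<bullet> (X ** T))"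
    by (simp add: Amap_T matrix_mult_algebra_simps inner_diff_left P_def
        inner_matrix_mult_left[of G X T, symmetric])
  have PTT: "P \<bullet> (T ** T) = (G ** T) \<bullet> (X ** T)"
    unfolding P_def using symT by (rule inner_transpose_mult_square)
  have XPhi: "(X ** Phi P) \<bullet> (X ** T) = P \<bullet> (T ** T) + P \<bullet> T"
  proof -
    have "(X ** Phi P) \<bullet> (X ** T) = (X ** T) \<bullet> (X ** Phi P)"
      by (rule inner_commute)
    also have "\<dots> = (transpose X ** (X ** T)) \<bullet> Phi P"
      by (rule inner_matrix_mult_left)
    also have "\<dots> = Phi P \<bullet> (T ** T + T)"
      unfolding gram_T by (rule inner_commute)
    also have "\<dots> = P \<bullet> (T ** T + T)"
      by (rule inner_Phi_symmetric) (simp add: symT matrix_mult_algebra_simps)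
    finally show ?thesis
      by (simp add: inner_add_right)
  qed
  have "0 = (G ** Amap X - X ** Phi P + \<beta> *\<^sub>R (X ** T)) \<bullet> (X ** T)"
    by (simp add: grad)
  also have "\<dots> = (G ** Amap X) \<bullet> (X ** T) - (X ** Phi P) \<bullet> (X ** T) + \<beta> * (norm (X ** T))\<^sup>2"
    by (simp add: inner_add_left inner_diff_left power2_norm_eq_inner)
  finally have "\<beta> * (norm (X ** T))\<^sup>2 = 3/2 * ((G ** T) \<bullet> (X ** T))"
    using GA XPhi PTT by linarith
  then show ?thesis
    by (simp add: G_def)
qed

lemma hfun_critical_point_sigma_min_le:
  fixes X :: "real^'p^'n"
  assumes "f differentiable (at (X ** Amap X))" and "\<beta> > 0"
    and "mgrad (hfun f \<beta>) X = 0" and "transpose X ** X \<noteq> mat 1"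
  shows "\<beta> * sigma_min X \<le> 3/2 * norm (Gfun f X)"
proof -
  define T where "T = transpose X ** X - mat 1"
  define G where "G = Gfun f X"
  have "norm T > 0"
    using assms(4) by (simp add: T_def)
  have "(\<beta> * norm (X ** T)) * norm (X ** T) = 3/2 * ((G ** T) \<bullet> (X ** T))"
    using hfun_critical_point_identity[OF assms(1,3)]
    by (simp add: T_def G_def power2_eq_square mult.assoc)
  also have "\<dots> \<le> (3/2 * norm (G ** T)) * norm (X ** T)"
    using norm_cauchy_schwarz[of "G ** T" "X ** T"] by simp
  finally have XT: "\<beta> * norm (X ** T) \<le> 3/2 * norm (G ** T)"
    by (cases "norm (X ** T) = 0") (auto elim: mult_right_le_imp_le)
  have "\<beta> * sigma_min X * norm T \<le> \<beta> * norm (X ** T)"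
    using sigma_min_mult_norm_le_matrix[of X T] assms(2) by (simp add: mult.assoc)
  also have "\<dots> \<le> 3/2 * norm G * norm T"
    using XT norm_matrix_mult_le[of G T] by simp
  finally show ?thesis
    using \<open>norm T > 0\<close> by (simp add: G_def)
qed

lemma le_sqrt_of_mult_le:
  fixes s M \<beta> :: real
  assumes "0 \<le> s" and "\<beta> > 0" and "12 * M \<le> \<beta>" and "\<beta> * s \<le> 3/2 * M"
  shows "s \<le> sqrt (2 * M / \<beta>)"
proof -
  have "\<beta> * s \<le> \<beta> * (1/8)"
    using assms(3,4) by linarith
  then have s_small: "s \<le> 1/8"
    using assms(2) by (rule mult_left_le_imp_le)
  have "0 \<le> \<beta> * s"
    using assms(1,2) by simp
  then have M_nonneg: "0 \<le> M"
    using assms(4) by linarith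
  have "\<beta> * s\<^sup>2 = (\<beta> * s) * s"
    by (simp add: power2_eq_square)
  also have "\<dots> \<le> (3/2 * M) * s"
    by (rule mult_right_mono[OF assms(4,1)])
  also have "\<dots> \<le> (3/2 * M) * (1/8)"
    by (rule mult_left_mono) (use s_small M_nonneg in auto)
  also have "\<dots> \<le> 2 * M"
    using M_nonneg by simp
  finally show ?thesis
    using assms(2) by (intro real_le_rsqrt) (simp add: pos_le_divide_eq mult.commute)
qed

theorem mainTheorem7:
  fixes f :: "real^'p^'n \<Rightarrow> real" and \<beta> :: real and Xs :: "real^'p^'n"
  assumes np: "CARD('p) \<le> CARD('n)"
    and diff: "\<And>X. f differentiable (at X)"
    and lipf: "loc_lipschitz f"
    and lipg: "loc_lipschitz (mgrad f)"
    and bpos: "\<beta> > 0"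
    and bge: "\<beta> \<ge> beta_bar f"
    and XO: "Xs \<in> Omega"
    and crit: "mgrad (hfun f \<beta>) Xs = 0"
  shows "(transpose Xs ** Xs = mat 1 \<and> stationary f Xs) \<or> sigma_min Xs \<le> sqrt (2 * M1 f / \<beta>)"
proof (cases "transpose Xs ** Xs = mat 1")
  case True
  then have "rgrad f Xs = 0"
    using mgrad_hfun_Stiefel[OF diff True] crit by simp
  with True show ?thesis
    by (simp add: stationary_def)
next
  case False
  have "12 * M1 f \<le> \<beta>"
    using bge by (simp add: beta_bar_def)
  moreover have "\<beta> * sigma_min Xs \<le> 3/2 * M1 f"
    using hfun_critical_point_sigma_min_le[OF diff bpos crit False]
      norm_Gfun_le_M1[OF loc_lipschitz_imp_continuous_on[OF lipg] XO] by linarith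
  ultimately have "sigma_min Xs \<le> sqrt (2 * M1 f / \<beta>)"
    by (rule le_sqrt_of_mult_le[OF sigma_min_nonneg bpos])
  then show ?thesis ..
qed

end
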